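(* Let $T\colon X\to X$ be an expansive piecewise invertible map (with respect to $\mathcal U$) on a compact Hausdorff space $X$. Then the projection $X'\to\bar X$, $(x,\mathbf U)\mapsto\mathbf U$, is a homeomorphism; in particular $T'$ and $\bar T$ are topologically conjugate.
   Context: Let $X$ be compact Hausdorff. A set $U$ is regular open if $U=\mathrm{int}(\overline U)$. A regular open partition of $X$ is a finite family of nonempty, pairwise disjoint regular open sets whose closures cover $X$. For regular open partitions $\mathcal V,\mathcal W$, $\mathcal V\vee\mathcal W=\{V\cap W\ne\emptyset: V\in\mathcal V,W\in\mathcal W\}$; $\mathcal V\preceq\mathcal W$ means each element of $\mathcal W$ lies in a (necessarily unique) element of $\mathcal V$. A continuous $T\colon X\to X$ is piecewise invertible w.r.t. a regular open partition $\mathcal U=\{U_i\}_{i\in I}$, $C_i:=\overline{U_i}$, if each restriction $T_i\colon C_i\to T(C_i)$ is a homeomorphism and $T(U_i)=\mathrm{int}(T(C_i))$; it is expansive if there are a compatible metric $d$ and $c>1$ with $d(Tx,Tx')\ge c\,d(x,x')$ for all $i$ and $x,x'\in C_i$. For a regular open partition $\mathcal V=\{V_j\}$, put $\mathcal T_i=\{T(U_i\cap V_j):U_i\cap V_j\neq\emptyset\}\cup\{X\setminus T(C_i)\}$ (omitting empty sets), $T(\mathcal V)=\bigvee_i\mathcal T_i$, and $T^{-1}(\mathcal V)=\{T_i^{-1}(O): i\in I,\ O\in\mathcal V\vee T(\mathcal U),\ O\subseteq T(U_i)\}$; these are regular open partitions, and $T^\beta,T^{-\alpha}$ denote iterates of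 these operations. Set $\mathcal U_{m,n}=\bigvee_{0\le\alpha\le m,0\le\beta\le n}T^{-\alpha}(T^\beta(\mathcal U))$; for $(m',n')\ge(m,n)$ componentwise, $\mathcal U_{m,n}\preceq\mathcal U_{m',n'}$. Let $\bar X=\varprojlim\mathcal U_{m,n}$ (inverse limit of finite discrete sets), whose elements are families $\mathbf U=(U_{m,n})$, $U_{m,n}\in\mathcal U_{m,n}$, compatible under inclusion. Let $X'=\{(x,(U_{m,n}))\in X\times\bar X: x\in\overline{U_{m,n}}\ \forall m,n\}$ with the subspace topology, $\bar T\colon\bar X\to\bar X$, $\bar T((U_{m,n}))=(V_{m,n})$ where $V_{m,n}$ is the unique element of $\mathcal U_{m,n}$ containing $T(U_{m+1,n})$, and $T'(x,\mathbf U)=(Tx,\bar T\mathbf U)$. *)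

theory Defs
  imports "HOL-Analysis.Analysis"
begin

definition regular_open :: "'a::topological_space set \<Rightarrow> bool" where
  "regular_open U \<longleftrightarrow> U = interior (closure U)"

definition ro_partition :: "'a::topological_space set set \<Rightarrow> bool" where
  "ro_partition P \<longleftrightarrow> finite P \<and> (\<forall>U\<in>P. U \<noteq> {} \<and> regular_open U)
     \<and> pairwise disjnt P \<and> \<Union>(closure ` P) = UNIV"

definition pjoin :: "'a set set \<Rightarrow> 'a set set \<Rightarrow> 'a set set" where
  "pjoin V W = {A \<inter> B | A B. A \<in> V \<and> B \<in> W \<and> A \<inter> B \<noteq> {}}"

definition bigjoin :: "('i \<Rightarrow> 'a set set) \<Rightarrow> 'i set \<Rightarrow> 'a set set" where
  "bigjoin P I = {(\<Inter>i\<in>I. f i) | f. (\<forall>i\<in>I. f i \<in> P i)} - {{}}"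

definition prefines :: "'a set set \<Rightarrow> 'a set set \<Rightarrow> bool" where
  "prefines V W \<longleftrightarrow> (\<forall>B\<in>W. \<exists>A\<in>V. B \<subseteq> A)"

definition piecewise_invertible :: "('a::topological_space \<Rightarrow> 'a) \<Rightarrow> 'a set set \<Rightarrow> bool" where
  "piecewise_invertible T \<UU> \<longleftrightarrow> ro_partition \<UU> \<and> continuous_on UNIV T \<and>
     (\<forall>U\<in>\<UU>. (\<exists>g. homeomorphism (closure U) (T ` closure U) T g)
              \<and> T ` U = interior (T ` closure U))"

definition expansive_pw :: "('a::topological_space \<Rightarrow> 'a) \<Rightarrow> 'a set set \<Rightarrow> bool" where
  "expansive_pw T \<UU> \<longleftrightarrow> (\<exists>(d::'a \<Rightarrow> 'a \<Rightarrow> real) (c::real).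
     Metric_space UNIV d \<and> Metric_space.mtopology UNIV d = euclidean \<and> c > 1 \<and>
     (\<forall>U\<in>\<UU>. \<forall>x\<in>closure U. \<forall>x'\<in>closure U. d (T x) (T x') \<ge> c * d x x'))"

definition img_part :: "('a::topological_space \<Rightarrow> 'a) \<Rightarrow> 'a set set \<Rightarrow> 'a set set \<Rightarrow> 'a set set" where
  "img_part T \<UU> V = bigjoin (\<lambda>U. ({T ` (U \<inter> B) | B. B \<in> V \<and> U \<inter> B \<noteq> {}}
                                   \<union> {UNIV - T ` closure U}) - {{}}) \<UU>"

definition pre_part :: "('a::topological_space \<Rightarrow> 'a) \<Rightarrow> 'a set set \<Rightarrow> 'a set set \<Rightarrow> 'a set set" where
  "pre_part T \<UU> V = {{x \<in> closure U. T x \<in> Q} | U Q.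
       U \<in> \<UU> \<and> Q \<in> pjoin V (img_part T \<UU> \<UU>) \<and> Q \<subseteq> T ` U}"

definition Umn :: "('a::topological_space \<Rightarrow> 'a) \<Rightarrow> 'a set set \<Rightarrow> nat \<Rightarrow> nat \<Rightarrow> 'a set set" where
  "Umn T \<UU> m n = bigjoin (\<lambda>(a, b). (pre_part T \<UU> ^^ a) ((img_part T \<UU> ^^ b) \<UU>))
                          ({0..m} \<times> {0..n})"

text \<open>The inverse limit, as a set of compatible families, with the inverse-limit topology
  (subspace of the product of the finite discrete spaces).\<close>
definition Xbar :: "('a::topological_space \<Rightarrow> 'a) \<Rightarrow> 'a set set \<Rightarrow> (nat \<times> nat \<Rightarrow> 'a set) set" where
  "Xbar T \<UU> = {W. (\<forall>m n. W (m, n) \<in> Umn T \<UU> m n) \<and>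
      (\<forall>m n m' n'. m \<le> m' \<and> n \<le> n' \<longrightarrow> W (m', n') \<subseteq> W (m, n))}"

definition Xbar_top :: "('a::topological_space \<Rightarrow> 'a) \<Rightarrow> 'a set set \<Rightarrow> (nat \<times> nat \<Rightarrow> 'a set) topology" where
  "Xbar_top T \<UU> = subtopology
     (product_topology (\<lambda>(m, n). discrete_topology (Umn T \<UU> m n)) UNIV) (Xbar T \<UU>)"

definition Tbar :: "('a::topological_space \<Rightarrow> 'a) \<Rightarrow> 'a set set \<Rightarrow> (nat \<times> nat \<Rightarrow> 'a set) \<Rightarrow> (nat \<times> nat \<Rightarrow> 'a set)" where
  "Tbar T \<UU> W = (\<lambda>(m, n). THE V. V \<in> Umn T \<UU> m n \<and> T ` W (Suc m, n) \<subseteq> V)"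

definition Xprime :: "('a::topological_space \<Rightarrow> 'a) \<Rightarrow> 'a set set \<Rightarrow> ('a \<times> (nat \<times> nat \<Rightarrow> 'a set)) set" where
  "Xprime T \<UU> = {(x, W). W \<in> Xbar T \<UU> \<and> (\<forall>m n. x \<in> closure (W (m, n)))}"

definition Xprime_top :: "('a::topological_space \<Rightarrow> 'a) \<Rightarrow> 'a set set \<Rightarrow> ('a \<times> (nat \<times> nat \<Rightarrow> 'a set)) topology" where
  "Xprime_top T \<UU> = subtopology (prod_topology euclidean (Xbar_top T \<UU>)) (Xprime T \<UU>)"

definition Tprime :: "('a::topological_space \<Rightarrow> 'a) \<Rightarrow> 'a set set \<Rightarrow> 'a \<times> (nat \<times> nat \<Rightarrow> 'a set) \<Rightarrow> 'a \<times> (nat \<times> nat \<Rightarrow> 'a set)" where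
  "Tprime T \<UU> p = (T (fst p), Tbar T \<UU> (snd p))"

end

theory Submission
  imports Defs
begin

text \<open>Every cell of \<open>\<U>_{m,n}\<close> lies in a cell of the \<open>m\<close>-fold pulled back partition
  \<open>T^{-m}(\<U>)\<close>, and since \<open>T\<close> expands distances by \<open>c > 1\<close> on the closure of each piece, the
  closure of such a cell has diameter at most \<open>diam X / c^m\<close>. So for a point \<open>(U_{m,n})\<close> of the
  inverse limit the closures of the \<open>U_{m,n}\<close> form a nested family of nonempty closed sets whose
  diameters tend to zero, and by compactness they meet in exactly one point. The projection
  \<open>X' \<rightarrow> X\<close>-bar is therefore a continuous bijection, and it is closed, being the restriction to
  the closed set \<open>X'\<close> of the projection \<open>X \<times> X\<close>-bar \<open>\<rightarrow> X\<close>-bar along the compact factor \<open>X\<close>.\<close>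

section \<open>Joins of disjoint families\<close>

lemma pairwise_disjnt_eq:
  assumes "pairwise disjnt P" "A \<in> P" "B \<in> P" "x \<in> A" "x \<in> B"
  shows "A = B"
  using assms unfolding pairwise_def disjnt_def by blast

lemma bigjoin_pairwise_disjnt:
  assumes "\<And>i. i \<in> I \<Longrightarrow> pairwise disjnt (P i)"
  shows "pairwise disjnt (bigjoin P I)"
proof (rule pairwiseI)
  fix A B assume A: "A \<in> bigjoin P I" and B: "B \<in> bigjoin P I" and "A \<noteq> B"
  obtain f where f: "A = (\<Inter>i\<in>I. f i)" "\<forall>i\<in>I. f i \<in> P i"
    using A unfolding bigjoin_def by blast
  obtain g where g: "B = (\<Inter>i\<in>I. g i)" "\<forall>i\<in>I. g i \<in> P i"
    using B unfolding bigjoin_def by blast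
  show "disjnt A B"
  proof (rule ccontr)
    assume "\<not> disjnt A B"
    then obtain x where "x \<in> A" "x \<in> B" by (auto simp: disjnt_def)
    have "f i = g i" if "i \<in> I" for i
    proof (rule pairwise_disjnt_eq[OF assms[OF that]])
      show "f i \<in> P i" "g i \<in> P i" using f(2) g(2) that by auto
      show "x \<in> f i" "x \<in> g i" using \<open>x \<in> A\<close> \<open>x \<in> B\<close> f(1) g(1) that by auto
    qed
    then have "A = B" using f(1) g(1) by simp
    with \<open>A \<noteq> B\<close> show False ..
  qed
qed

lemma bigjoin_nonempty: "A \<in> bigjoin P I \<Longrightarrow> A \<noteq> {}"
  unfolding bigjoin_def by blast

lemma prefines_factor_bigjoin: "i \<in> I \<Longrightarrow> prefines (P i) (bigjoin P I)"
  unfolding prefines_def bigjoin_def by blast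

lemma prefines_bigjoin_mono:
  assumes "I \<subseteq> I'"
  shows "prefines (bigjoin P I) (bigjoin P I')"
  unfolding prefines_def
proof
  fix A assume "A \<in> bigjoin P I'"
  then obtain f where f: "A = (\<Inter>i\<in>I'. f i)" "\<forall>i\<in>I'. f i \<in> P i" "A \<noteq> {}"
    unfolding bigjoin_def by blast
  then have "A \<subseteq> (\<Inter>i\<in>I. f i)" "(\<Inter>i\<in>I. f i) \<in> bigjoin P I"
    using assms unfolding bigjoin_def by blast+
  then show "\<exists>B\<in>bigjoin P I. A \<subseteq> B" by blast
qed

lemma bigjoin_cell_containing:
  assumes "\<And>i. i \<in> I \<Longrightarrow> \<exists>A\<in>P i. S \<subseteq> A" and "S \<noteq> {}"
  shows "\<exists>A\<in>bigjoin P I. S \<subseteq> A"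
proof -
  obtain f where f: "\<forall>i\<in>I. f i \<in> P i \<and> S \<subseteq> f i"
    using bchoice[of I "\<lambda>i A. A \<in> P i \<and> S \<subseteq> A"] assms(1) by blast
  then have "S \<subseteq> (\<Inter>i\<in>I. f i)" by blast
  moreover have "(\<Inter>i\<in>I. f i) \<in> bigjoin P I"
    using f calculation assms(2) unfolding bigjoin_def by blast
  ultimately show ?thesis by blast
qed

section \<open>The partitions \<open>\<U>_{m,n}\<close> and the shift on the inverse limit\<close>

lemma pre_part_image: "S \<in> pre_part T \<UU> V \<Longrightarrow> \<exists>A\<in>V. T ` S \<subseteq> A"
  unfolding pre_part_def pjoin_def by blast

lemma prefines_pre_part_Umn: "prefines ((pre_part T \<UU> ^^ m) \<UU>) (Umn T \<UU> m n)"
  unfolding Umn_def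
  using prefines_factor_bigjoin[of "(m, 0)" "{0..m} \<times> {0..n}"
      "\<lambda>(a, b). (pre_part T \<UU> ^^ a) ((img_part T \<UU> ^^ b) \<UU>)"]
  by simp

lemma prefines_Umn_mono:
  "m \<le> m' \<Longrightarrow> n \<le> n' \<Longrightarrow> prefines (Umn T \<UU> m n) (Umn T \<UU> m' n')"
  unfolding Umn_def by (rule prefines_bigjoin_mono) auto

lemma Umn_Suc_image:
  assumes "W \<in> Umn T \<UU> (Suc m) n"
  shows "\<exists>V\<in>Umn T \<UU> m n. T ` W \<subseteq> V"
proof -
  let ?P = "\<lambda>(a, b). (pre_part T \<UU> ^^ a) ((img_part T \<UU> ^^ b) \<UU>)"
  have W: "W \<in> bigjoin ?P ({0..Suc m} \<times> {0..n})" using assms unfolding Umn_def .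
  have "\<exists>A\<in>?P i. T ` W \<subseteq> A" if i: "i \<in> {0..m} \<times> {0..n}" for i
  proof -
    obtain a b where ab: "i = (a, b)" by (cases i)
    then have "(Suc a, b) \<in> {0..Suc m} \<times> {0..n}" using i by auto
    then have "prefines (?P (Suc a, b)) (bigjoin ?P ({0..Suc m} \<times> {0..n}))"
      by (rule prefines_factor_bigjoin)
    then obtain S where S: "S \<in> ?P (Suc a, b)" "W \<subseteq> S"
      using W unfolding prefines_def by blast
    then have "S \<in> pre_part T \<UU> (?P (a, b))" by simp
    then obtain A where "A \<in> ?P (a, b)" "T ` S \<subseteq> A" using pre_part_image by blast
    then show ?thesis using S(2) ab by blast
  qed
  moreover have "T ` W \<noteq> {}" using bigjoin_nonempty[OF W] by blast
  ultimately show ?thesis unfolding Umn_def by (rule bigjoin_cell_containing)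
qed

lemma Xbar_cell: "W \<in> Xbar T \<UU> \<Longrightarrow> W (m, n) \<in> Umn T \<UU> m n"
  unfolding Xbar_def by blast

lemma Xbar_antimono: "W \<in> Xbar T \<UU> \<Longrightarrow> m \<le> m' \<Longrightarrow> n \<le> n' \<Longrightarrow> W (m', n') \<subseteq> W (m, n)"
  unfolding Xbar_def by blast

lemma Xbar_cell_nonempty: "W \<in> Xbar T \<UU> \<Longrightarrow> W (m, n) \<noteq> {}"
  using Xbar_cell bigjoin_nonempty unfolding Umn_def by metis

locale piecewise_injective =
  fixes T :: "'a::topological_space \<Rightarrow> 'a" and \<UU> :: "'a set set"
  assumes disjoint: "pairwise disjnt \<UU>"
    and inj_closure: "\<And>U. U \<in> \<UU> \<Longrightarrow> inj_on T (closure U)"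
begin

lemma img_part_pairwise_disjnt:
  assumes "pairwise disjnt V"
  shows "pairwise disjnt (img_part T \<UU> V)"
  unfolding img_part_def
proof (rule bigjoin_pairwise_disjnt)
  fix U assume U: "U \<in> \<UU>"
  let ?Im = "{T ` (U \<inter> B) | B. B \<in> V \<and> U \<inter> B \<noteq> {}}"
  have "pairwise disjnt ?Im"
  proof (rule pairwiseI)
    fix X Y assume "X \<in> ?Im" "Y \<in> ?Im" "X \<noteq> Y"
    then obtain B B' where XY: "X = T ` (U \<inter> B)" "Y = T ` (U \<inter> B')"
      and "B \<in> V" "B' \<in> V" "B \<noteq> B'"
      by blast
    then have "B \<inter> B' = {}" using assms by (simp add: pairwise_def disjnt_def)
    have "U \<subseteq> closure U" by (rule closure_subset)
    then have "X \<inter> Y = T ` ((U \<inter> B) \<inter> (U \<inter> B'))"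
      unfolding XY by (intro inj_on_image_Int[OF inj_closure[OF U], symmetric]) auto
    then show "disjnt X Y" using \<open>B \<inter> B' = {}\<close> by (auto simp: disjnt_def)
  qed
  moreover have "disjnt (UNIV - T ` closure U) X" if "X \<in> ?Im" for X
    using that closure_subset[of U] by (auto simp: disjnt_def)
  ultimately have "pairwise disjnt (insert (UNIV - T ` closure U) ?Im)"
    by (auto simp: pairwise_insert disjnt_sym)
  then show "pairwise disjnt ((?Im \<union> {UNIV - T ` closure U}) - {{}})"
    by (rule pairwise_subset) auto
qed

lemma pre_part_pairwise_disjnt:
  assumes "pairwise disjnt V"
  shows "pairwise disjnt (pre_part T \<UU> V)"
proof (rule pairwiseI)
  have join: "pairwise disjnt (pjoin V (img_part T \<UU> \<UU>))"
    using assms img_part_pairwise_disjnt[OF disjoint]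
    unfolding pjoin_def pairwise_def disjnt_def by blast
  have in_piece: "x \<in> U" if "x \<in> closure U" "T x \<in> T ` U" "U \<in> \<UU>" for x U
    using that inj_closure closure_subset unfolding inj_on_def by blast
  fix X Y assume "X \<in> pre_part T \<UU> V" "Y \<in> pre_part T \<UU> V" "X \<noteq> Y"
  then obtain U1 Q1 U2 Q2 where
    X: "X = {x \<in> closure U1. T x \<in> Q1}" "U1 \<in> \<UU>" "Q1 \<in> pjoin V (img_part T \<UU> \<UU>)"
      "Q1 \<subseteq> T ` U1" and
    Y: "Y = {x \<in> closure U2. T x \<in> Q2}" "U2 \<in> \<UU>" "Q2 \<in> pjoin V (img_part T \<UU> \<UU>)"
      "Q2 \<subseteq> T ` U2"
    unfolding pre_part_def by blast
  show "disjnt X Y"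
  proof (rule ccontr)
    assume "\<not> disjnt X Y"
    then obtain x where x: "x \<in> X" "x \<in> Y" by (auto simp: disjnt_def)
    then have "U1 = U2"
      using in_piece X Y pairwise_disjnt_eq[OF disjoint X(2) Y(2)] by blast
    moreover have "Q1 = Q2" using x X Y pairwise_disjnt_eq[OF join X(3) Y(3)] by blast
    ultimately show False using X Y \<open>X \<noteq> Y\<close> by simp
  qed
qed

lemma Umn_pairwise_disjnt: "pairwise disjnt (Umn T \<UU> m n)"
proof -
  have "pairwise disjnt ((img_part T \<UU> ^^ b) \<UU>)" for b
    by (induction b) (simp_all add: disjoint img_part_pairwise_disjnt)
  then have "pairwise disjnt ((pre_part T \<UU> ^^ a) ((img_part T \<UU> ^^ b) \<UU>))" for a b
    by (induction a) (simp_all add: pre_part_pairwise_disjnt)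
  then show ?thesis unfolding Umn_def by (intro bigjoin_pairwise_disjnt) auto
qed

lemma Tbar_cell:
  assumes W: "W \<in> Xbar T \<UU>"
  shows "Tbar T \<UU> W (m, n) \<in> Umn T \<UU> m n" and "T ` W (Suc m, n) \<subseteq> Tbar T \<UU> W (m, n)"
proof -
  obtain V where V: "V \<in> Umn T \<UU> m n" "T ` W (Suc m, n) \<subseteq> V"
    using Umn_Suc_image[OF Xbar_cell[OF W]] by blast
  obtain x where "x \<in> W (Suc m, n)" using Xbar_cell_nonempty[OF W] by blast
  then have "\<exists>!V. V \<in> Umn T \<UU> m n \<and> T ` W (Suc m, n) \<subseteq> V"
    using V pairwise_disjnt_eq[OF Umn_pairwise_disjnt] by blast
  then have "Tbar T \<UU> W (m, n) \<in> Umn T \<UU> m n \<and> T ` W (Suc m, n) \<subseteq> Tbar T \<UU> W (m, n)"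
    unfolding Tbar_def case_prod_conv by (rule theI')
  then show "Tbar T \<UU> W (m, n) \<in> Umn T \<UU> m n" and "T ` W (Suc m, n) \<subseteq> Tbar T \<UU> W (m, n)"
    by blast+
qed

lemma Tbar_in_Xbar:
  assumes W: "W \<in> Xbar T \<UU>"
  shows "Tbar T \<UU> W \<in> Xbar T \<UU>"
  unfolding Xbar_def
proof (intro CollectI conjI allI impI)
  fix m n show "Tbar T \<UU> W (m, n) \<in> Umn T \<UU> m n" by (rule Tbar_cell[OF W])
next
  fix m n m' n' :: nat assume le: "m \<le> m' \<and> n \<le> n'"
  obtain B where B: "B \<in> Umn T \<UU> m n" "Tbar T \<UU> W (m', n') \<subseteq> B"
    using prefines_Umn_mono[of m m' n n' T \<UU>] Tbar_cell(1)[OF W] le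
    unfolding prefines_def by blast
  obtain x where "x \<in> W (Suc m', n')" using Xbar_cell_nonempty[OF W] by blast
  moreover have "W (Suc m', n') \<subseteq> W (Suc m, n)" using Xbar_antimono[OF W] le by simp
  ultimately have "T x \<in> B" "T x \<in> Tbar T \<UU> W (m, n)"
    using B Tbar_cell[OF W] by blast+
  then have "B = Tbar T \<UU> W (m, n)"
    using pairwise_disjnt_eq[OF Umn_pairwise_disjnt B(1) Tbar_cell(1)[OF W]] by blast
  then show "Tbar T \<UU> W (m', n') \<subseteq> Tbar T \<UU> W (m, n)" using B by simp
qed

lemma Tprime_in_Xprime:
  assumes cont: "continuous_on UNIV T" and p: "p \<in> Xprime T \<UU>"
  shows "Tprime T \<UU> p \<in> Xprime T \<UU>"
proof -
  obtain x W where xW: "p = (x, W)" "W \<in> Xbar T \<UU>" "\<forall>m n. x \<in> closure (W (m, n))"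
    using p unfolding Xprime_def by blast
  have "T x \<in> closure (Tbar T \<UU> W (m, n))" for m n
  proof -
    have "T ` W (Suc m, n) \<subseteq> closure (Tbar T \<UU> W (m, n))"
      using Tbar_cell(2)[OF xW(2)] closure_subset by blast
    then have "T ` closure (W (Suc m, n)) \<subseteq> closure (Tbar T \<UU> W (m, n))"
      by (intro image_closure_subset continuous_on_subset[OF cont]) auto
    then show ?thesis using xW(3) by blast
  qed
  then show ?thesis using xW Tbar_in_Xbar unfolding Xprime_def Tprime_def by simp
qed

end

lemma piecewise_invertible_imp_injective:
  assumes "piecewise_invertible T \<UU>"
  shows "piecewise_injective T \<UU>"
proof
  show "pairwise disjnt \<UU>"
    using assms unfolding piecewise_invertible_def ro_partition_def by blast
next
  fix U assume "U \<in> \<UU>"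
  then obtain g where "homeomorphism (closure U) (T ` closure U) T g"
    using assms unfolding piecewise_invertible_def by blast
  then show "inj_on T (closure U)" by (metis homeomorphism_apply1 inj_on_inverseI)
qed

section \<open>Nested cells shrink to points\<close>

lemma pre_part_iterate_diameter:
  fixes d :: "'a::topological_space \<Rightarrow> 'a \<Rightarrow> real"
  assumes "c > 0"
    and expands: "\<forall>U\<in>\<UU>. \<forall>x\<in>closure U. \<forall>x'\<in>closure U. c * d x x' \<le> d (T x) (T x')"
    and bounded: "\<forall>x y. d x y \<le> M" and cont: "continuous_on UNIV T"
  shows "S \<in> (pre_part T \<UU> ^^ a) V \<Longrightarrow> x \<in> closure S \<Longrightarrow> y \<in> closure S \<Longrightarrow> d x y \<le> M / c ^ a"
proof (induction a arbitrary: S x y)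
  case 0
  then show ?case using bounded by simp
next
  case (Suc a)
  then obtain U Q A where S: "S = {x \<in> closure U. T x \<in> Q}" "U \<in> \<UU>"
    and A: "A \<in> (pre_part T \<UU> ^^ a) V" "Q \<subseteq> A"
    unfolding pre_part_def pjoin_def by auto
  have "closure S \<subseteq> closure U" using S(1) by (simp add: closure_minimal)
  then have "c * d x y \<le> d (T x) (T y)" using expands S(2) Suc.prems(2,3) by blast
  moreover have "T ` S \<subseteq> closure A" using S(1) A(2) closure_subset by blast
  then have "T ` closure S \<subseteq> closure A"
    by (intro image_closure_subset continuous_on_subset[OF cont]) auto
  then have "d (T x) (T y) \<le> M / c ^ a" using Suc.IH[OF A(1)] Suc.prems(2,3) by blast
  ultimately have "c * d x y \<le> M / c ^ a" by linarith
  then show ?case using \<open>c > 0\<close> by (simp add: pos_le_divide_eq mult_ac)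
qed

lemma compact_metric_bounded:
  assumes "Metric_space M d" "compact_space (Metric_space.mtopology M d)"
  shows "\<exists>B. \<forall>x\<in>M. \<forall>y\<in>M. d x y \<le> B"
  using Metric_space.compactin_imp_mbounded[OF assms(1)] Metric_space.mbounded_alt[OF assms(1)]
    Metric_space.topspace_mtopology[OF assms(1)] assms(2)
  by (metis compact_space_def)

lemma Xbar_closures_meet_at_most_once:
  fixes T :: "'a::topological_space \<Rightarrow> 'a"
  assumes "compact (UNIV :: 'a set)"
    and "expansive_pw T \<UU>" and cont: "continuous_on UNIV T"
    and W: "W \<in> Xbar T \<UU>"
    and x: "\<forall>m n. x \<in> closure (W (m, n))" and y: "\<forall>m n. y \<in> closure (W (m, n))"
  shows "x = y"
proof -
  obtain d :: "'a \<Rightarrow> 'a \<Rightarrow> real" and c where ms: "Metric_space UNIV d"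
    and top: "Metric_space.mtopology UNIV d = euclidean" and "c > 1"
    and expands: "\<forall>U\<in>\<UU>. \<forall>x\<in>closure U. \<forall>x'\<in>closure U. c * d x x' \<le> d (T x) (T x')"
    using assms(2) unfolding expansive_pw_def by blast
  obtain M where M: "\<forall>x y. d x y \<le> M"
    using compact_metric_bounded[OF ms] top assms(1) by (auto simp: compact_space_def)
  have "d x y \<le> M / c ^ a" for a
  proof -
    obtain S where S: "S \<in> (pre_part T \<UU> ^^ a) \<UU>" "W (a, 0) \<subseteq> S"
      using prefines_pre_part_Umn Xbar_cell[OF W] unfolding prefines_def by blast
    have "closure (W (a, 0)) \<subseteq> closure S" using S(2) by (rule closure_mono)
    then have "x \<in> closure S" "y \<in> closure S" using x y by blast+
    then show ?thesis
      using pre_part_iterate_diameter[OF _ expands M cont S(1)] \<open>c > 1\<close> by simp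
  qed
  then have "d x y \<le> 0"
    using LIMSEQ_le_const[OF LIMSEQ_divide_realpow_zero[OF \<open>c > 1\<close>]] by blast
  then show "x = y"
    using Metric_space.nonneg[OF ms] Metric_space.zero[OF ms] by (metis UNIV_I order_antisym)
qed

lemma Xbar_closures_meet:
  fixes T :: "'a::topological_space \<Rightarrow> 'a"
  assumes "compact (UNIV :: 'a set)" and W: "W \<in> Xbar T \<UU>"
  shows "\<exists>x. \<forall>m n. x \<in> closure (W (m, n))"
proof -
  let ?C = "range (\<lambda>k. closure (W k))"
  have "UNIV \<inter> \<Inter>?C \<noteq> {}"
  proof (rule compact_imp_fip[OF assms(1)])
    fix B assume "finite B" "B \<subseteq> ?C"
    then obtain K where K: "finite K" "B = (\<lambda>k. closure (W k)) ` K"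
      by (meson finite_subset_image)
    then have "finite (fst ` K \<union> snd ` K)" by simp
    then obtain N where N: "\<forall>i\<in>fst ` K \<union> snd ` K. i \<le> N"
      using finite_nat_set_iff_bounded_le by blast
    have "W (N, N) \<subseteq> closure (W k)" if k: "k \<in> K" for k
    proof -
      obtain m n where k_eq: "k = (m, n)" by (cases k)
      then have "m \<le> N" "n \<le> N" using N k by force+
      then have "W (N, N) \<subseteq> W k" unfolding k_eq by (rule Xbar_antimono[OF W])
      then show ?thesis using closure_subset by blast
    qed
    then have "W (N, N) \<subseteq> \<Inter>B" using K(2) by blast
    then show "UNIV \<inter> \<Inter>B \<noteq> {}" using Xbar_cell_nonempty[OF W] by blast
  qed auto
  then show ?thesis by blast
qed

section \<open>The projection from \<open>X'\<close> to the inverse limit\<close>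

lemma topspace_Xbar_top: "topspace (Xbar_top T \<UU>) = Xbar T \<UU>"
  unfolding Xbar_top_def by (auto simp: Xbar_cell)

lemma topspace_Xprime_top: "topspace (Xprime_top T \<UU>) = Xprime T \<UU>"
  unfolding Xprime_top_def by (auto simp: Xprime_def topspace_Xbar_top)

lemma continuous_map_Xbar_component:
  "continuous_map (Xbar_top T \<UU>) (discrete_topology (Umn T \<UU> m n)) (\<lambda>W. W (m, n))"
proof -
  let ?D = "\<lambda>(m, n). discrete_topology (Umn T \<UU> m n)"
  have "continuous_map (product_topology ?D UNIV) (?D (m, n)) (\<lambda>W. W (m, n))"
    by (rule continuous_map_product_projection) simp
  then show ?thesis unfolding Xbar_top_def by (simp add: continuous_map_from_subtopology)
qed

lemma closedin_Xprime: "closedin (prod_topology euclidean (Xbar_top T \<UU>)) (Xprime T \<UU>)"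
proof -
  let ?P = "prod_topology euclidean (Xbar_top T \<UU>)"
  have "openin ?P (topspace ?P - Xprime T \<UU>)"
  proof (subst openin_subopen, intro ballI)
    fix p assume p: "p \<in> topspace ?P - Xprime T \<UU>"
    obtain x W where pW: "p = (x, W)" by (cases p)
    then have W: "W \<in> Xbar T \<UU>" using p by (simp add: topspace_Xbar_top)
    then obtain m n where x: "x \<notin> closure (W (m, n))" using p pW by (auto simp: Xprime_def)
    let ?N = "(- closure (W (m, n))) \<times> {W' \<in> Xbar T \<UU>. W' (m, n) \<in> {W (m, n)}}"
    have "openin (Xbar_top T \<UU>) {W' \<in> Xbar T \<UU>. W' (m, n) \<in> {W (m, n)}}"
      using openin_continuous_map_preimage[OF continuous_map_Xbar_component[of T \<UU> m n], of "{W (m, n)}"]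
        Xbar_cell[OF W]
      by (simp add: topspace_Xbar_top)
    then have "openin ?P ?N" by (simp add: openin_prod_Times_iff open_Compl)
    moreover have "p \<in> ?N" using pW W x by simp
    moreover have "?N \<subseteq> topspace ?P - Xprime T \<UU>"
      by (auto simp: topspace_Xbar_top Xprime_def) metis
    ultimately show "\<exists>Z. openin ?P Z \<and> p \<in> Z \<and> Z \<subseteq> topspace ?P - Xprime T \<UU>" by blast
  qed
  moreover have "Xprime T \<UU> \<subseteq> topspace ?P" by (auto simp: topspace_Xbar_top Xprime_def)
  ultimately show ?thesis by (simp add: closedin_def)
qed
lemma homeomorphic_map_snd_Xprime:
  fixes T :: "'a::topological_space \<Rightarrow> 'a"
  assumes "compact (UNIV :: 'a set)"
    and unique: "\<And>W x y. W \<in> Xbar T \<UU> \<Longrightarrow> \<forall>m n. x \<in> closure (W (m, n))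
                         \<Longrightarrow> \<forall>m n. y \<in> closure (W (m, n)) \<Longrightarrow> x = y"
  shows "homeomorphic_map (Xprime_top T \<UU>) (Xbar_top T \<UU>) snd"
proof (rule bijective_closed_imp_homeomorphic_map)
  show "continuous_map (Xprime_top T \<UU>) (Xbar_top T \<UU>) snd"
    unfolding Xprime_top_def by (rule continuous_map_from_subtopology[OF continuous_map_snd])
  have snd_closed: "closed_map (prod_topology (euclidean :: 'a topology) (Xbar_top T \<UU>)) (Xbar_top T \<UU>) snd"
    using assms(1) by (intro closed_map_snd) (simp add: compact_space_def)
  show "closed_map (Xprime_top T \<UU>) (Xbar_top T \<UU>) snd"
    unfolding closed_map_def
  proof (intro allI impI)
    fix C assume "closedin (Xprime_top T \<UU>) C"
    then have "closedin (prod_topology euclidean (Xbar_top T \<UU>)) C"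
      unfolding Xprime_top_def using closedin_closed_subtopology[OF closedin_Xprime] by blast
    then show "closedin (Xbar_top T \<UU>) (snd ` C)" using snd_closed unfolding closed_map_def by blast
  qed
  have "Xbar T \<UU> \<subseteq> snd ` Xprime T \<UU>"
  proof
    fix W assume W: "W \<in> Xbar T \<UU>"
    then obtain x where "\<forall>m n. x \<in> closure (W (m, n))" using Xbar_closures_meet[OF assms(1)] by blast
    then have "(x, W) \<in> Xprime T \<UU>" using W by (simp add: Xprime_def)
    then show "W \<in> snd ` Xprime T \<UU>" by force
  qed
  then show "snd ` topspace (Xprime_top T \<UU>) = topspace (Xbar_top T \<UU>)"
    by (auto simp: topspace_Xprime_top topspace_Xbar_top Xprime_def)
  show "inj_on snd (topspace (Xprime_top T \<UU>))"
  proof (rule inj_onI)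
    fix p q assume "p \<in> topspace (Xprime_top T \<UU>)" "q \<in> topspace (Xprime_top T \<UU>)" "snd p = snd q"
    then obtain x y W where "p = (x, W)" "q = (y, W)" "W \<in> Xbar T \<UU>"
        "\<forall>m n. x \<in> closure (W (m, n))" "\<forall>m n. y \<in> closure (W (m, n))"
      by (cases p, cases q) (auto simp: topspace_Xprime_top Xprime_def)
    then show "p = q" using unique by simp
  qed
qed

theorem lemma5p6:
  fixes T :: "'a::t2_space \<Rightarrow> 'a" and \<UU> :: "'a set set"
  assumes "compact (UNIV :: 'a set)"
    and "piecewise_invertible T \<UU>"
    and "expansive_pw T \<UU>"
  shows "homeomorphic_map (Xprime_top T \<UU>) (Xbar_top T \<UU>) snd
    \<and> Tprime T \<UU> ` Xprime T \<UU> \<subseteq> Xprime T \<UU>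
    \<and> Tbar T \<UU> ` Xbar T \<UU> \<subseteq> Xbar T \<UU>
    \<and> (\<forall>p\<in>Xprime T \<UU>. snd (Tprime T \<UU> p) = Tbar T \<UU> (snd p))"
proof -
  interpret piecewise_injective T \<UU>
    using assms(2) by (rule piecewise_invertible_imp_injective)
  have cont: "continuous_on UNIV T"
    using assms(2) unfolding piecewise_invertible_def by blast
  have "homeomorphic_map (Xprime_top T \<UU>) (Xbar_top T \<UU>) snd"
    by (rule homeomorphic_map_snd_Xprime[OF assms(1)
          Xbar_closures_meet_at_most_once[OF assms(1,3) cont]])
  moreover have "Tprime T \<UU> ` Xprime T \<UU> \<subseteq> Xprime T \<UU>"
    using Tprime_in_Xprime[OF cont] by blast
  moreover have "Tbar T \<UU> ` Xbar T \<UU> \<subseteq> Xbar T \<UU>"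
    using Tbar_in_Xbar by blast
  ultimately show ?thesis by (simp add: Tprime_def)
qed

end
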